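(* Let $\Gamma=(V,E)$ be a simple graph of order $n$ and let $\lambda$ be the spectral radius of $\Gamma$. Then the global defensive alliance number of $\Gamma$ satisfies $$\gamma_{a}(\Gamma)\ge \left\lceil\frac{n}{\lambda+2}\right\rceil$$ and the global strong defensive alliance number of $\Gamma$ satisfies $$\gamma_{\hat{a}}(\Gamma)\ge \left\lceil\frac{n}{\lambda+1}\right\rceil.$$
   Context: For $S\subseteq V$ and $v\in V$, $N_S(v)=\{u\in S: u\sim v\}$ and $N_{V\setminus S}(v)=\{u\in V\setminus S: u\sim v\}$. A nonempty set $S\subseteq V$ is a defensive alliance if $|N_S(v)|+1\ge |N_{V\setminus S}(v)|$ for every $v\in S$, and a strong defensive alliance if $|N_S(v)|\ge |N_{V\setminus S}(v)|$ for every $v\in S$. A (strong) defensive alliance is global if it is a dominating set, i.e. every vertex of $V\setminus S$ is adjacent to some vertex of $S$. $\gamma_a(\Gamma)$ (resp. $\gamma_{\hat a}(\Gamma)$) is the minimum cardinality of a global defensive (resp. global strong defensive) alliance. The spectral radius is the largest eigenvalue of the adjacency matrix of $\Gamma$. *)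

theory Defs
  imports "HOL-Analysis.Analysis"
begin

text \<open>A finite simple graph: vertex set is the finite type 'n (all of UNIV),
  edge relation E symmetric and irreflexive.\<close>

definition simple_graph :: "('n::finite \<Rightarrow> 'n \<Rightarrow> bool) \<Rightarrow> bool" where
  "simple_graph E \<longleftrightarrow> (\<forall>u v. E u v \<longrightarrow> E v u) \<and> (\<forall>v. \<not> E v v)"

definition nbrs_in :: "('n \<Rightarrow> 'n \<Rightarrow> bool) \<Rightarrow> 'n set \<Rightarrow> 'n \<Rightarrow> 'n set" where
  "nbrs_in E S v = {u \<in> S. E u v}"

definition defensive_alliance :: "('n::finite \<Rightarrow> 'n \<Rightarrow> bool) \<Rightarrow> 'n set \<Rightarrow> bool" where
  "defensive_alliance E S \<longleftrightarrow> S \<noteq> {} \<and>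
     (\<forall>v\<in>S. card (nbrs_in E S v) + 1 \<ge> card (nbrs_in E (UNIV - S) v))"

definition strong_defensive_alliance :: "('n::finite \<Rightarrow> 'n \<Rightarrow> bool) \<Rightarrow> 'n set \<Rightarrow> bool" where
  "strong_defensive_alliance E S \<longleftrightarrow> S \<noteq> {} \<and>
     (\<forall>v\<in>S. card (nbrs_in E S v) \<ge> card (nbrs_in E (UNIV - S) v))"

definition dominating :: "('n::finite \<Rightarrow> 'n \<Rightarrow> bool) \<Rightarrow> 'n set \<Rightarrow> bool" where
  "dominating E S \<longleftrightarrow> (\<forall>v \<in> UNIV - S. \<exists>u\<in>S. E u v)"

definition global_defensive_alliance_number :: "('n::finite \<Rightarrow> 'n \<Rightarrow> bool) \<Rightarrow> nat" where
  "global_defensive_alliance_number E =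
     Min {card S | S. defensive_alliance E S \<and> dominating E S}"

definition global_strong_defensive_alliance_number :: "('n::finite \<Rightarrow> 'n \<Rightarrow> bool) \<Rightarrow> nat" where
  "global_strong_defensive_alliance_number E =
     Min {card S | S. strong_defensive_alliance E S \<and> dominating E S}"

definition adjacency_matrix :: "('n::finite \<Rightarrow> 'n \<Rightarrow> bool) \<Rightarrow> real^'n^'n" where
  "adjacency_matrix E = (\<chi> i j. if E i j then 1 else 0)"

definition spectral_radius :: "('n::finite \<Rightarrow> 'n \<Rightarrow> bool) \<Rightarrow> real" where
  "spectral_radius E =
     Max {l. \<exists>x::real^'n. x \<noteq> 0 \<and> adjacency_matrix E *v x = l *\<^sub>R x}"

end

theory Submission
  imports Defs
begin

text \<open>The largest eigenvalue \<lambda> of the symmetric adjacency matrix bounds its Rayleigh quotient, so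
  testing with the indicator vector of a vertex set S shows that the degrees inside S sum to at
  most \<lambda> |S|. If S dominates, every vertex outside S is adjacent to S, so n - |S| is at most the
  sum of the degrees from S to its complement; in a defensive alliance each of these exceeds the
  corresponding inner degree by at most 1 (by at most 0 in a strong one). Hence
  n \<le> (\<lambda> + 2) |S|, respectively n \<le> (\<lambda> + 1) |S|.\<close>

lemma quadratic_nonneg_imp_linear_coeff_zero:
  fixes a c :: real
  assumes nonneg: "\<And>t. 0 \<le> 2 * t * a + t\<^sup>2 * c" and "0 \<le> a" and "0 \<le> c"
  shows "a = 0"
proof (rule ccontr)
  assume "a \<noteq> 0"
  define t where "t = - a / (c + 1)"
  have t_scaled: "t * (c + 1) = - a"
    using \<open>0 \<le> c\<close> by (simp add: t_def)
  have "(2 * t * a + t\<^sup>2 * c) * (c + 1)\<^sup>2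
      = 2 * a * (t * (c + 1)) * (c + 1) + c * (t * (c + 1))\<^sup>2"
    by (simp add: algebra_simps power2_eq_square)
  also have "\<dots> = - (a\<^sup>2 * (c + 2))"
    unfolding t_scaled by (simp add: algebra_simps power2_eq_square)
  also have "\<dots> < 0"
    using \<open>a \<noteq> 0\<close> \<open>0 \<le> c\<close> by (simp add: add_nonneg_pos)
  finally show False
    using nonneg[of t] by (simp add: mult_less_0_iff)
qed

lemma self_adjoint_nonneg_quadratic_zero_imp_zero:
  fixes f :: "'a::real_inner \<Rightarrow> 'a"
  assumes "linear f"
    and self_adjoint: "\<And>x y. f x \<bullet> y = x \<bullet> f y"
    and nonneg: "\<And>x. 0 \<le> x \<bullet> f x"
    and zero: "v \<bullet> f v = 0"
  shows "f v = 0"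
proof -
  define w where "w = f v"
  have expand: "(v + t *\<^sub>R w) \<bullet> f (v + t *\<^sub>R w) = 2 * t * (w \<bullet> w) + t\<^sup>2 * (w \<bullet> f w)" for t
  proof -
    have "v \<bullet> f w = w \<bullet> w"
      using self_adjoint[of v w] by (simp add: w_def inner_commute)
    then show ?thesis
      using zero linear_add[OF \<open>linear f\<close>] linear_scale[OF \<open>linear f\<close>]
      by (simp add: w_def algebra_simps inner_commute power2_eq_square)
  qed
  have "w \<bullet> w = 0"
  proof (rule quadratic_nonneg_imp_linear_coeff_zero)
    show "0 \<le> 2 * t * (w \<bullet> w) + t\<^sup>2 * (w \<bullet> f w)" for t
      using nonneg[of "v + t *\<^sub>R w"] expand[of t] by simp
  qed (use nonneg in auto)
  then show ?thesis by (simp add: w_def)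
qed

lemma self_adjoint_max_eigenvalue_Rayleigh:
  fixes f :: "'a::euclidean_space \<Rightarrow> 'a"
  assumes "linear f" and self_adjoint: "\<And>x y. f x \<bullet> y = x \<bullet> f y"
  obtains v \<mu> where "v \<noteq> 0" "f v = \<mu> *\<^sub>R v" "\<And>x. x \<bullet> f x \<le> \<mu> * (x \<bullet> x)"
proof -
  have "continuous_on (sphere 0 1) (\<lambda>x. x \<bullet> f x)"
    using \<open>linear f\<close> by (intro continuous_intros linear_continuous_on) (simp add: linear_conv_bounded_linear)
  moreover have "sphere (0::'a) 1 \<noteq> {}"
    by simp
  ultimately obtain v where v: "v \<in> sphere 0 1"
    and v_max: "\<And>u. u \<in> sphere 0 1 \<Longrightarrow> u \<bullet> f u \<le> v \<bullet> f v"
    using continuous_attains_sup[OF compact_sphere] by blast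
  define \<mu> where "\<mu> = v \<bullet> f v"
  have Rayleigh: "x \<bullet> f x \<le> \<mu> * (x \<bullet> x)" for x
  proof (cases "x = 0")
    case False
    define u where "u = x /\<^sub>R norm x"
    have "u \<bullet> f u = (x \<bullet> f x) / (norm x)\<^sup>2"
      using linear_scale[OF \<open>linear f\<close>] False by (simp add: u_def power2_eq_square field_simps)
    also have "(norm x)\<^sup>2 = x \<bullet> x"
      by (simp add: dot_square_norm)
    finally have "u \<bullet> f u = (x \<bullet> f x) / (x \<bullet> x)" .
    moreover have "u \<in> sphere 0 1"
      using False by (simp add: u_def)
    ultimately show ?thesis
      using v_max[of u] False by (simp add: \<mu>_def divide_le_eq)
  qed (simp add: linear_0[OF \<open>linear f\<close>])
  define g where "g x = \<mu> *\<^sub>R x - f x" for x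
  have "g v = 0"
  proof (rule self_adjoint_nonneg_quadratic_zero_imp_zero[where f = g])
    show "linear g"
      using \<open>linear f\<close> unfolding g_def linear_iff by (simp add: algebra_simps)
  next
    show "g x \<bullet> y = x \<bullet> g y" for x y
      using self_adjoint[of x y] by (simp add: g_def algebra_simps inner_commute)
    show "0 \<le> x \<bullet> g x" for x
      using Rayleigh[of x] by (simp add: g_def inner_diff_right)
    show "v \<bullet> g v = 0"
      using v by (simp add: g_def \<mu>_def inner_diff_right dot_square_norm)
  qed
  then have "f v = \<mu> *\<^sub>R v"
    by (simp add: g_def)
  moreover have "v \<noteq> 0"
    using v by auto
  ultimately show thesis
    using that Rayleigh by blast
qed

lemma self_adjoint_finite_eigenvalues:
  fixes f :: "'a::euclidean_space \<Rightarrow> 'a"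
  assumes self_adjoint: "\<And>x y. f x \<bullet> y = x \<bullet> f y"
  shows "finite {\<mu>. \<exists>x. x \<noteq> 0 \<and> f x = \<mu> *\<^sub>R x}" (is "finite ?L")
proof -
  define eigvec where "eigvec \<mu> = (SOME x. x \<noteq> 0 \<and> f x = \<mu> *\<^sub>R x)" for \<mu>
  have eigvec: "eigvec \<mu> \<noteq> 0 \<and> f (eigvec \<mu>) = \<mu> *\<^sub>R eigvec \<mu>" if "\<mu> \<in> ?L" for \<mu>
    unfolding eigvec_def by (rule someI_ex) (use that in blast)
  have orthogonal_eigvec: "eigvec \<mu> \<bullet> eigvec \<nu> = 0"
    if "\<mu> \<in> ?L" "\<nu> \<in> ?L" "\<mu> \<noteq> \<nu>" for \<mu> \<nu>
  proof -
    have "\<mu> * (eigvec \<mu> \<bullet> eigvec \<nu>) = \<nu> * (eigvec \<mu> \<bullet> eigvec \<nu>)"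
      using self_adjoint[of "eigvec \<mu>" "eigvec \<nu>"] eigvec[OF that(1)] eigvec[OF that(2)] by simp
    then show ?thesis
      using \<open>\<mu> \<noteq> \<nu>\<close> by simp
  qed
  have inj: "inj_on eigvec ?L"
  proof (rule inj_onI)
    fix \<mu> \<nu> assume "\<mu> \<in> ?L" "\<nu> \<in> ?L" "eigvec \<mu> = eigvec \<nu>"
    then show "\<mu> = \<nu>"
      using orthogonal_eigvec eigvec by fastforce
  qed
  have "pairwise orthogonal (eigvec ` ?L)"
    using orthogonal_eigvec by (auto simp: pairwise_def orthogonal_def)
  moreover have "0 \<notin> eigvec ` ?L"
    using eigvec by fastforce
  ultimately have "independent (eigvec ` ?L)"
    by (rule pairwise_orthogonal_independent)
  then show ?thesis
    using independent_bound finite_imageD[OF _ inj] by blast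
qed

lemma symmetric_matrix_self_adjoint:
  fixes A :: "real^'n^'n"
  assumes "transpose A = A"
  shows "(A *v x) \<bullet> y = x \<bullet> (A *v y)"
  by (metis assms dot_lmul_matrix inner_commute vector_transpose_matrix)

lemma adjacency_matrix_symmetric:
  assumes "simple_graph E"
  shows "transpose (adjacency_matrix E) = adjacency_matrix E"
  using assms unfolding simple_graph_def adjacency_matrix_def transpose_def
  by (simp add: vec_eq_iff)

lemma adjacency_matrix_mult_indicator:
  assumes "simple_graph E"
  shows "(adjacency_matrix E *v (\<chi> i. indicator S i)) $ v = real (card (nbrs_in E S v))"
proof -
  have "(adjacency_matrix E *v (\<chi> i. indicator S i)) $ v
      = (\<Sum>u\<in>UNIV. (if E v u then 1 else 0) * indicator S u)"
    by (simp add: matrix_vector_mult_def adjacency_matrix_def)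
  also have "\<dots> = (\<Sum>u\<in>UNIV. indicator (nbrs_in E S v) u)"
    using assms by (intro sum.cong) (auto simp: indicator_def nbrs_in_def simple_graph_def)
  finally show ?thesis
    by (simp add: indicator_def sum.If_cases)
qed

lemma inner_indicator_adjacency_matrix:
  assumes "simple_graph E"
  shows "(\<chi> i. indicator S i) \<bullet> (adjacency_matrix E *v (\<chi> i. indicator S i))
           = real (\<Sum>v\<in>S. card (nbrs_in E S v))"
proof -
  have "(\<chi> i. indicator S i) \<bullet> (adjacency_matrix E *v (\<chi> i. indicator S i))
      = (\<Sum>v\<in>UNIV. real (card (nbrs_in E S v)) * indicator S v)"
    by (simp add: inner_vec_def adjacency_matrix_mult_indicator[OF assms] mult.commute)
  then show ?thesis
    by (simp add: sum_mult_indicator)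
qed

lemma inner_indicator_self:
  "(\<chi> i. indicator S i) \<bullet> (\<chi> i. indicator S i :: real^'n::finite) = real (card S)"
  by (simp add: inner_vec_def indicator_def sum.If_cases)

lemma quadratic_form_le_spectral_radius:
  assumes "simple_graph E"
  shows "x \<bullet> (adjacency_matrix E *v x) \<le> spectral_radius E * (x \<bullet> x)"
proof -
  let ?A = "adjacency_matrix E"
  have self_adjoint: "(?A *v x) \<bullet> y = x \<bullet> (?A *v y)" for x y
    by (rule symmetric_matrix_self_adjoint[OF adjacency_matrix_symmetric[OF assms]])
  obtain v \<mu> where "v \<noteq> 0" "?A *v v = \<mu> *\<^sub>R v"
    and Rayleigh: "x \<bullet> (?A *v x) \<le> \<mu> * (x \<bullet> x)"
    using self_adjoint_max_eigenvalue_Rayleigh[OF matrix_vector_mul_linear self_adjoint] by metis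
  then have "\<mu> \<le> spectral_radius E"
    unfolding spectral_radius_def
    by (intro Max_ge self_adjoint_finite_eigenvalues self_adjoint) blast
  then show ?thesis
    using Rayleigh mult_right_mono[of \<mu> "spectral_radius E" "x \<bullet> x"] by simp
qed

lemma sum_card_nbrs_in_le_spectral_radius:
  assumes "simple_graph E"
  shows "real (\<Sum>v\<in>S. card (nbrs_in E S v)) \<le> spectral_radius E * real (card S)"
  using quadratic_form_le_spectral_radius[OF assms, of "\<chi> i. indicator S i"]
  by (simp add: inner_indicator_adjacency_matrix[OF assms] inner_indicator_self)

lemma spectral_radius_nonneg:
  assumes "simple_graph E"
  shows "0 \<le> spectral_radius E"
proof -
  have "nbrs_in E {v} v = {}" for v
    using assms unfolding simple_graph_def nbrs_in_def by auto
  then show ?thesis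
    using sum_card_nbrs_in_le_spectral_radius[OF assms, of "{undefined}"] by simp
qed

lemma dominating_card_le:
  fixes E :: "'n::finite \<Rightarrow> 'n \<Rightarrow> bool"
  assumes "simple_graph E" and "dominating E S"
  shows "CARD('n) \<le> card S + (\<Sum>v\<in>S. card (nbrs_in E (UNIV - S) v))"
proof -
  have "UNIV - S \<subseteq> (\<Union>v\<in>S. nbrs_in E (UNIV - S) v)"
  proof
    fix u assume "u \<in> UNIV - S"
    moreover obtain v where "v \<in> S" "E v u"
      using \<open>u \<in> UNIV - S\<close> assms(2) unfolding dominating_def by blast
    ultimately show "u \<in> (\<Union>v\<in>S. nbrs_in E (UNIV - S) v)"
      using assms(1) unfolding simple_graph_def nbrs_in_def by blast
  qed
  then have "card (UNIV - S) \<le> card (\<Union>v\<in>S. nbrs_in E (UNIV - S) v)"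
    by (rule card_mono[OF finite])
  also have "\<dots> \<le> (\<Sum>v\<in>S. card (nbrs_in E (UNIV - S) v))"
    by (rule card_UN_le[OF finite])
  finally have "card (UNIV - S) \<le> (\<Sum>v\<in>S. card (nbrs_in E (UNIV - S) v))" .
  moreover have "CARD('n) = card S + card (UNIV - S)"
    by (simp add: card_Diff_subset card_mono)
  ultimately show ?thesis
    by linarith
qed

lemma dominating_card_bound:
  fixes E :: "'n::finite \<Rightarrow> 'n \<Rightarrow> bool"
  assumes "simple_graph E" "dominating E S"
    and outer_le: "\<And>v. v \<in> S \<Longrightarrow> card (nbrs_in E (UNIV - S) v) \<le> card (nbrs_in E S v) + k"
  shows "real CARD('n) \<le> (spectral_radius E + 1 + real k) * real (card S)"
proof -
  have "(\<Sum>v\<in>S. card (nbrs_in E (UNIV - S) v)) \<le> (\<Sum>v\<in>S. card (nbrs_in E S v) + k)"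
    by (intro sum_mono outer_le)
  then have "CARD('n) \<le> card S + (\<Sum>v\<in>S. card (nbrs_in E S v)) + k * card S"
    using dominating_card_le[OF assms(1,2)] by (simp add: sum.distrib mult.commute)
  then have "real CARD('n) \<le> real (card S) + real (\<Sum>v\<in>S. card (nbrs_in E S v)) + real k * real (card S)"
    using of_nat_mono by fastforce
  then show ?thesis
    using sum_card_nbrs_in_le_spectral_radius[OF assms(1), of S] unfolding distrib_right by linarith
qed

lemma defensive_alliance_dominating_card_bound:
  fixes E :: "'n::finite \<Rightarrow> 'n \<Rightarrow> bool"
  assumes "simple_graph E" "defensive_alliance E S" "dominating E S"
  shows "real CARD('n) \<le> (spectral_radius E + 2) * real (card S)"
  using dominating_card_bound[OF assms(1,3), of 1] assms(2)
  unfolding defensive_alliance_def by (simp add: add.assoc)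

lemma strong_defensive_alliance_dominating_card_bound:
  fixes E :: "'n::finite \<Rightarrow> 'n \<Rightarrow> bool"
  assumes "simple_graph E" "strong_defensive_alliance E S" "dominating E S"
  shows "real CARD('n) \<le> (spectral_radius E + 1) * real (card S)"
  using dominating_card_bound[OF assms(1,3), of 0] assms(2)
  unfolding strong_defensive_alliance_def by simp

lemma ceiling_card_divide_le_Min_card:
  fixes P :: "'n::finite set \<Rightarrow> bool" and c :: real
  assumes "P UNIV" "0 < c" and card_le: "\<And>S. P S \<Longrightarrow> real CARD('n) \<le> c * real (card S)"
  shows "\<lceil>real CARD('n) / c\<rceil> \<le> int (Min {card S | S. P S})"
proof -
  have "finite {card S | S. P S}"
    by (rule finite_subset[of _ "{..CARD('n)}"]) (auto simp: card_mono)
  moreover have "{card S | S. P S} \<noteq> {}"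
    using assms by blast
  ultimately have "Min {card S | S. P S} \<in> {card S | S. P S}"
    by (rule Min_in)
  then obtain S where "P S" and Min_eq: "Min {card S | S. P S} = card S"
    by blast
  then have "real CARD('n) / c \<le> real (card S)"
    using card_le \<open>0 < c\<close> by (simp add: pos_divide_le_eq mult.commute[of c])
  then show ?thesis
    unfolding Min_eq by (simp add: ceiling_le_iff)
qed

theorem theorem3:
  fixes E :: "'n::finite \<Rightarrow> 'n \<Rightarrow> bool"
  assumes "simple_graph E"
  shows "int (global_defensive_alliance_number E)
           \<ge> \<lceil>real CARD('n) / (spectral_radius E + 2)\<rceil>
         \<and> int (global_strong_defensive_alliance_number E)
           \<ge> \<lceil>real CARD('n) / (spectral_radius E + 1)\<rceil>"
proof
  show "int (global_defensive_alliance_number E) \<ge> \<lceil>real CARD('n) / (spectral_radius E + 2)\<rceil>"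
    unfolding global_defensive_alliance_number_def
  proof (rule ceiling_card_divide_le_Min_card)
    show "defensive_alliance E UNIV \<and> dominating E UNIV"
      by (auto simp: defensive_alliance_def dominating_def nbrs_in_def)
    show "0 < spectral_radius E + 2"
      using spectral_radius_nonneg[OF assms] by simp
  qed (use defensive_alliance_dominating_card_bound[OF assms] in blast)
  show "int (global_strong_defensive_alliance_number E) \<ge> \<lceil>real CARD('n) / (spectral_radius E + 1)\<rceil>"
    unfolding global_strong_defensive_alliance_number_def
  proof (rule ceiling_card_divide_le_Min_card)
    show "strong_defensive_alliance E UNIV \<and> dominating E UNIV"
      by (auto simp: strong_defensive_alliance_def dominating_def nbrs_in_def)
    show "0 < spectral_radius E + 1"
      using spectral_radius_nonneg[OF assms] by simp
  qed (use strong_defensive_alliance_dominating_card_bound[OF assms] in blast)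
qed

end
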